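(* Let $A$ be a $p$-torsion free ring with a ring endomorphism $\phi:A\to A$ satisfying $\phi(a)\equiv a^p\pmod{pA}$ for all $a\in A$, and let $n\ge1$. Regard $W_n(A)$ as an $A$-module via $s_\phi$. Then the map \[ \Psi_n:W_n(A)\to A\oplus\phi_*A\oplus\cdots\oplus\phi^{n-1}_*A, \] \[ (a_0,\dots,a_{n-1})\mapsto\Big(a_0,\ \Delta_1(a_0)+a_1,\ \dots,\ \Delta_{n-1}(a_0)+\Delta_{n-2}(a_1)+\cdots+\Delta_1(a_{n-2})+a_{n-1}\Big) \] is an isomorphism of $A$-modules.
   Context: $W(A)$, $W_n(A)$ are the rings of $p$-typical Witt vectors (of length $n$), with Teichmüller lift $[a]$, Verschiebung $V$ and ghost components $\varphi_m(a_0,a_1,\dots)=\sum_{i=0}^m p^ia_i^{p^{m-i}}$. There is a unique ring map $s_\phi:A\to W(A)$ with $\varphi_m(s_\phi(a))=\phi^m(a)$ for all $m$; its composite with the restriction $W(A)\to W_n(A)$ is also denoted $s_\phi$. Define $\Delta_{W_n}:W_n(A)\to W_{n-1}(A)$ by $V\Delta_{W_n}(\alpha)=\alpha-s_\phi(a_0)$ for $\alpha=(a_0,\dots,a_{n-1})$. For $a\in A$ set $\Delta_0(a)=a$ and, for $s\ge1$, $\Delta_s(a)=\Delta_{W_2}\circ\Delta_{W_3}\circ\cdots\circ\Delta_{W_{s+1}}([a])\in A=W_1(A)$. $\phi^j_*A$ denotes $A$ regarded as an $A$-module via $\phi^j$. *)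

theory Defs
  imports "HOL-Computational_Algebra.Primes"
begin

text \<open>p-typical Witt vectors of length n over a ring A are represented as functions
  nat => A whose components with index >= n vanish.  Since the theorem concerns
  p-torsion free A, the ghost map is injective, and the Witt ring operations are
  characterised (and here defined) by acting componentwise on ghost components.\<close>

definition Wn :: "nat \<Rightarrow> (nat \<Rightarrow> 'a::comm_ring_1) set" where
  "Wn n = {x. \<forall>i\<ge>n. x i = 0}"

definition ghost :: "nat \<Rightarrow> (nat \<Rightarrow> 'a::comm_ring_1) \<Rightarrow> nat \<Rightarrow> 'a" where
  "ghost p x m = (\<Sum>i\<le>m. of_nat (p ^ i) * x i ^ (p ^ (m - i)))"

definition witt_add :: "nat \<Rightarrow> nat \<Rightarrow> (nat \<Rightarrow> 'a::comm_ring_1) \<Rightarrow> (nat \<Rightarrow> 'a) \<Rightarrow> (nat \<Rightarrow> 'a)" where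
  "witt_add p n x y = (THE z. z \<in> Wn n \<and> (\<forall>m<n. ghost p z m = ghost p x m + ghost p y m))"

definition witt_sub :: "nat \<Rightarrow> nat \<Rightarrow> (nat \<Rightarrow> 'a::comm_ring_1) \<Rightarrow> (nat \<Rightarrow> 'a) \<Rightarrow> (nat \<Rightarrow> 'a)" where
  "witt_sub p n x y = (THE z. z \<in> Wn n \<and> (\<forall>m<n. ghost p z m = ghost p x m - ghost p y m))"

definition witt_mult :: "nat \<Rightarrow> nat \<Rightarrow> (nat \<Rightarrow> 'a::comm_ring_1) \<Rightarrow> (nat \<Rightarrow> 'a) \<Rightarrow> (nat \<Rightarrow> 'a)" where
  "witt_mult p n x y = (THE z. z \<in> Wn n \<and> (\<forall>m<n. ghost p z m = ghost p x m * ghost p y m))"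

definition teich :: "nat \<Rightarrow> 'a::comm_ring_1 \<Rightarrow> (nat \<Rightarrow> 'a)" where
  "teich n a = (\<lambda>i. if i = 0 \<and> 0 < n then a else 0)"

definition verschiebung :: "nat \<Rightarrow> (nat \<Rightarrow> 'a::comm_ring_1) \<Rightarrow> (nat \<Rightarrow> 'a)" where
  "verschiebung n x = (\<lambda>i. if i = 0 \<or> n \<le> i then 0 else x (i - 1))"

definition s_phi :: "nat \<Rightarrow> ('a::comm_ring_1 \<Rightarrow> 'a) \<Rightarrow> nat \<Rightarrow> 'a \<Rightarrow> (nat \<Rightarrow> 'a)" where
  "s_phi p phi n a = (THE z. z \<in> Wn n \<and> (\<forall>m<n. ghost p z m = (phi ^^ m) a))"

definition DeltaW :: "nat \<Rightarrow> ('a::comm_ring_1 \<Rightarrow> 'a) \<Rightarrow> nat \<Rightarrow> (nat \<Rightarrow> 'a) \<Rightarrow> (nat \<Rightarrow> 'a)" where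
  "DeltaW p phi n \<alpha> = (THE \<beta>. \<beta> \<in> Wn (n - 1) \<and>
      verschiebung n \<beta> = witt_sub p n \<alpha> (s_phi p phi n (\<alpha> 0)))"

fun iterD :: "nat \<Rightarrow> ('a::comm_ring_1 \<Rightarrow> 'a) \<Rightarrow> nat \<Rightarrow> (nat \<Rightarrow> 'a) \<Rightarrow> (nat \<Rightarrow> 'a)" where
  "iterD p phi 0 \<alpha> = \<alpha>"
| "iterD p phi (Suc 0) \<alpha> = \<alpha>"
| "iterD p phi (Suc (Suc k)) \<alpha> = iterD p phi (Suc k) (DeltaW p phi (Suc (Suc k)) \<alpha>)"

definition Delta :: "nat \<Rightarrow> ('a::comm_ring_1 \<Rightarrow> 'a) \<Rightarrow> nat \<Rightarrow> 'a \<Rightarrow> 'a" where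
  "Delta p phi s a = (if s = 0 then a else iterD p phi (Suc s) (teich (Suc s) a) 0)"

text \<open>Psi_n : W_n(A) -> A + phi_*A + ... + phi^{n-1}_*A (elements of the target are
  functions nat => A vanishing from index n on).\<close>
definition Psi :: "nat \<Rightarrow> ('a::comm_ring_1 \<Rightarrow> 'a) \<Rightarrow> nat \<Rightarrow> (nat \<Rightarrow> 'a) \<Rightarrow> (nat \<Rightarrow> 'a)" where
  "Psi p phi n \<alpha> = (\<lambda>k. if k < n then (\<Sum>i\<le>k. Delta p phi (k - i) (\<alpha> i)) else 0)"

end

(*
  Since A is p-torsion free, the ghost map identifies W_n(A) with the sequences
  (g_0, ..., g_{n-1}) satisfying the Dwork congruences g_m = phi(g_{m-1}) mod p^m, with
  componentwise ring operations; s_phi(a) has ghost components phi^m(a).  The key identity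
  p^s Delta_s(a) = a^{p^s} - phi(a^{p^{s-1}}), obtained by iterating the defining equation of
  Delta_{W_k}, shows that p^k times the k-th component of Psi_n(alpha) is g_k - phi(g_{k-1}),
  where g is the ghost vector of alpha.  This expression is additive in g and turns
  multiplication by the ghost vector (phi^m(a))_m into multiplication by phi^k(a), so after
  cancelling p^k the module properties follow.  Psi_n is bijective because it is unitriangular.
*)
theory Submission
  imports Defs
begin

lemma of_nat_power_dvd_diff_power:
  fixes a b :: "'a::comm_ring_1"
  assumes ab: "of_nat p ^ Suc j dvd a - b"
  shows "of_nat p ^ Suc (Suc j) dvd a ^ p - b ^ p"
proof -
  let ?S = "\<Sum>i<p. b ^ (p - Suc i) * a ^ i"
  have p_dvd_ab: "of_nat p dvd a - b"
    using ab by (metis dvd_trans dvd_triv_left power_Suc)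
  have "of_nat p dvd b ^ (p - Suc i) * a ^ i - b ^ (p - Suc i) * b ^ i" for i
  proof -
    have "of_nat p dvd b ^ (p - Suc i) * (a ^ i - b ^ i)"
      using p_dvd_ab power_diff_sumr2[of a i b] by (simp add: dvd_trans)
    then show ?thesis by (simp add: algebra_simps)
  qed
  then have "of_nat p dvd (\<Sum>i<p. b ^ (p - Suc i) * a ^ i - b ^ (p - Suc i) * b ^ i)"
    by (simp add: dvd_sum)
  moreover have "(\<Sum>i<p. b ^ (p - Suc i) * b ^ i) = of_nat p * b ^ (p - 1)"
    by (simp add: power_add[symmetric])
  ultimately have "of_nat p dvd ?S"
    by (metis (no_types) dvd_add dvd_triv_left sum_subtractf diff_add_cancel)
  with ab have "of_nat p ^ Suc j * of_nat p dvd (a - b) * ?S"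
    by (rule mult_dvd_mono)
  then show ?thesis
    by (simp add: power_diff_sumr2 power_Suc2[symmetric] del: power_Suc)
qed

lemma of_nat_dvd_diff_power_power:
  fixes a b :: "'a::comm_ring_1"
  assumes "of_nat p dvd a - b"
  shows "of_nat p ^ Suc j dvd a ^ p ^ j - b ^ p ^ j"
proof (induction j)
  case (Suc j)
  then have "of_nat p ^ Suc (Suc j) dvd (a ^ p ^ j) ^ p - (b ^ p ^ j) ^ p"
    by (rule of_nat_power_dvd_diff_power)
  then show ?case
    by (simp add: power_mult[symmetric] power_Suc2 del: power_Suc)
qed (use assms in simp)

lemma ghost_eq: "ghost p z m = (\<Sum>i\<le>m. of_nat p ^ i * z i ^ p ^ (m - i))"
  by (simp add: ghost_def)

lemma ghost_eq_lessThan: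
  "ghost p z m = (\<Sum>i<m. of_nat p ^ i * z i ^ p ^ (m - i)) + of_nat p ^ m * z m"
  by (simp add: ghost_eq lessThan_Suc_atMost[symmetric])

lemma ghost_0 [simp]: "ghost p z 0 = z 0"
  by (simp add: ghost_def)

lemma ghost_cong: "(\<And>i. i \<le> m \<Longrightarrow> x i = y i) \<Longrightarrow> ghost p x m = ghost p y m"
  unfolding ghost_def by (intro sum.cong) auto

lemma ghost_fun_upd_above: "m < k \<Longrightarrow> ghost p (z(k := c)) m = ghost p z m"
  by (intro ghost_cong) auto

lemma ghost_fun_upd_same:
  "ghost p (z(m := c)) m = ghost p (z(m := 0)) m + of_nat p ^ m * c"
proof -
  have "(\<Sum>i<m. of_nat p ^ i * (z(m := c)) i ^ p ^ (m - i))
      = (\<Sum>i<m. of_nat p ^ i * (z(m := 0)) i ^ p ^ (m - i))"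
    by (intro sum.cong) auto
  then show ?thesis by (simp add: ghost_eq_lessThan)
qed

text \<open>A sequence g satisfies the Dwork congruences if p^m divides frob_diff phi g m for all m;
  ghost components of Witt vectors do, and conversely.\<close>
definition frob_diff :: "('a::comm_ring_1 \<Rightarrow> 'a) \<Rightarrow> (nat \<Rightarrow> 'a) \<Rightarrow> nat \<Rightarrow> 'a" where
  "frob_diff phi g m = (if m = 0 then g 0 else g m - phi (g (m - 1)))"

lemma frob_diff_cong:
  "(\<And>i. i \<le> m \<Longrightarrow> g i = h i) \<Longrightarrow> frob_diff phi g m = frob_diff phi h m"
  by (simp add: frob_diff_def)

locale frobenius_lift =
  fixes p :: nat and phi :: "'a::comm_ring_1 \<Rightarrow> 'a"
  assumes phi_1: "phi 1 = 1"
    and phi_add [simp]: "\<And>x y. phi (x + y) = phi x + phi y"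
    and phi_mult [simp]: "\<And>x y. phi (x * y) = phi x * phi y"
    and phi_frobenius: "\<And>a. of_nat p dvd phi a - a ^ p"
begin

lemma phi_0 [simp]: "phi 0 = 0"
  using phi_add[of 0 0] by simp

lemma phi_uminus [simp]: "phi (- x) = - phi x"
proof -
  have "phi x + phi (- x) = 0"
    using phi_add[of x "- x"] by simp
  then show ?thesis by (metis neg_eq_iff_add_eq_0)
qed

lemma phi_diff [simp]: "phi (x - y) = phi x - phi y"
  using phi_add[of x "- y"] by simp

lemma phi_of_nat [simp]: "phi (of_nat k) = of_nat k"
  by (induction k) (simp_all add: phi_1)

lemma phi_power [simp]: "phi (x ^ k) = phi x ^ k"
  by (induction k) (simp_all add: phi_1)

lemma phi_sum: "phi (sum f A) = (\<Sum>i\<in>A. phi (f i))"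
  by (induction A rule: infinite_finite_induct) simp_all

lemma power_power_minus_phi_dvd:
  "of_nat p ^ Suc j dvd (x ^ p) ^ p ^ j - phi x ^ p ^ j"
proof -
  have "of_nat p dvd x ^ p - phi x"
    using phi_frobenius[of x] by (metis dvd_minus_iff minus_diff_eq)
  then show ?thesis by (rule of_nat_dvd_diff_power_power)
qed

lemma frob_diff_ghost_dvd: "of_nat p ^ m dvd frob_diff phi (ghost p z) m"
proof (cases m)
  case (Suc k)
  let ?lower = "\<Sum>i<Suc k. of_nat p ^ i * z i ^ p ^ (Suc k - i)"
  have "?lower = (\<Sum>i\<le>k. of_nat p ^ i * (z i ^ p) ^ p ^ (k - i))"
    unfolding lessThan_Suc_atMost
    by (intro sum.cong) (auto simp: Suc_diff_le power_mult[symmetric] mult.commute)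
  then have lower: "?lower - phi (ghost p z k)
      = (\<Sum>i\<le>k. of_nat p ^ i * ((z i ^ p) ^ p ^ (k - i) - phi (z i) ^ p ^ (k - i)))"
    by (simp add: ghost_eq phi_sum sum_subtractf right_diff_distrib del: power_Suc)
  have "of_nat p ^ Suc k dvd ?lower - phi (ghost p z k)"
    unfolding lower
  proof (rule dvd_sum)
    fix i assume "i \<in> {..k}"
    then have "Suc k = i + Suc (k - i)" by simp
    then have "of_nat p ^ Suc k = of_nat p ^ i * (of_nat p ^ Suc (k - i) :: 'a)"
      by (metis power_add)
    then show "of_nat p ^ Suc k dvd
        of_nat p ^ i * ((z i ^ p) ^ p ^ (k - i) - phi (z i) ^ p ^ (k - i))"
      using power_power_minus_phi_dvd by (simp add: mult_dvd_mono)
  qed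
  moreover have "frob_diff phi (ghost p z) m
      = (?lower - phi (ghost p z k)) + of_nat p ^ Suc k * z (Suc k)"
    using Suc by (simp add: frob_diff_def ghost_eq_lessThan[of p z "Suc k"] del: power_Suc)
  ultimately show ?thesis
    using Suc by (simp del: power_Suc)
qed simp

lemma frob_diff_add:
  "frob_diff phi (\<lambda>m. g m + h m) m = frob_diff phi g m + frob_diff phi h m"
  by (simp add: frob_diff_def)

lemma frob_diff_diff:
  "frob_diff phi (\<lambda>m. g m - h m) m = frob_diff phi g m - frob_diff phi h m"
  by (simp add: frob_diff_def)

lemma frob_diff_scale:
  "frob_diff phi (\<lambda>m. (phi ^^ m) a * g m) m = (phi ^^ m) a * frob_diff phi g m"
  by (cases m) (simp_all add: frob_diff_def right_diff_distrib)

lemma frob_diff_mult_dvd: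
  assumes "of_nat p ^ m dvd frob_diff phi g m" and "of_nat p ^ m dvd frob_diff phi h m"
  shows "of_nat p ^ m dvd frob_diff phi (\<lambda>m. g m * h m) m"
proof (cases m)
  case (Suc k)
  have "g m * h m - phi (g k * h k)
      = g m * frob_diff phi h m + phi (h k) * frob_diff phi g m"
    using Suc by (simp add: frob_diff_def algebra_simps)
  then show ?thesis
    using assms Suc by (simp add: frob_diff_def)
qed (use assms in simp)

lemma frob_diff_funpow_dvd: "of_nat p ^ m dvd frob_diff phi (\<lambda>m. (phi ^^ m) a) m"
  by (cases m) (simp_all add: frob_diff_def)

lemma ghost_surj:
  assumes dwork: "\<And>m. m < n \<Longrightarrow> of_nat p ^ m dvd frob_diff phi g m"
  shows "\<exists>z\<in>Wn n. \<forall>m<n. ghost p z m = g m"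
proof -
  have "\<exists>z\<in>Wn k. \<forall>m<k. ghost p z m = g m" if "k \<le> n" for k
    using that
  proof (induction k)
    case 0
    show ?case by (rule bexI[of _ "\<lambda>_. 0"]) (auto simp: Wn_def)
  next
    case (Suc k)
    then obtain z where z: "z \<in> Wn k" "\<forall>m<k. ghost p z m = g m" by auto
    let ?z0 = "z(k := 0)"
    have below: "ghost p ?z0 m = g m" if "m < k" for m
      using z(2) that by (simp add: ghost_fun_upd_above)
    have "g k - ghost p ?z0 k = frob_diff phi g k - frob_diff phi (ghost p ?z0) k"
      using below by (cases k) (simp_all add: frob_diff_def)
    then have "of_nat p ^ k dvd g k - ghost p ?z0 k"
      using dwork[of k] frob_diff_ghost_dvd[of k ?z0] Suc.prems by simp
    then obtain c where c: "g k = ghost p ?z0 k + of_nat p ^ k * c"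
      by (metis dvdE diff_eq_eq add.commute)
    have "z(k := c) \<in> Wn (Suc k)"
      using z(1) by (auto simp: Wn_def)
    moreover have "ghost p (z(k := c)) m = g m" if "m < Suc k" for m
    proof (cases "m < k")
      case True
      then show ?thesis
        using z(2) by (simp add: ghost_fun_upd_above)
    next
      case False
      with that have "m = k" by simp
      then show ?thesis
        using c ghost_fun_upd_same[of p z k c] by simp
    qed
    ultimately show ?case by blast
  qed
  then show ?thesis by simp
qed

end

lemma The_verschiebung_preimage:
  assumes "z \<in> Wn n" and "z 0 = 0"
  shows "(THE \<beta>. \<beta> \<in> Wn (n - 1) \<and> verschiebung n \<beta> = z) = (\<lambda>i. z (Suc i))"
proof (rule the_equality)
  show "(\<lambda>i. z (Suc i)) \<in> Wn (n - 1) \<and> verschiebung n (\<lambda>i. z (Suc i)) = z"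
    using assms by (auto simp: Wn_def verschiebung_def fun_eq_iff split: nat.split)
next
  fix \<beta> assume \<beta>: "\<beta> \<in> Wn (n - 1) \<and> verschiebung n \<beta> = z"
  show "\<beta> = (\<lambda>i. z (Suc i))"
  proof
    fix i
    show "\<beta> i = z (Suc i)"
      using \<beta> fun_cong[of "verschiebung n \<beta>" z "Suc i"]
      by (cases "Suc i < n") (auto simp: Wn_def verschiebung_def)
  qed
qed

lemma ghost_shift:
  assumes "0 < p" and "z 0 = 0"
  shows "of_nat p * ghost p (\<lambda>i. z (Suc i)) m = ghost p z (Suc m)"
proof -
  have "ghost p z (Suc m)
      = z 0 ^ p ^ Suc m + (\<Sum>i\<le>m. of_nat p ^ Suc i * z (Suc i) ^ p ^ (m - i))"
    unfolding ghost_eq sum.atMost_Suc_shift by simp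
  then show ?thesis
    using assms by (simp add: ghost_eq sum_distrib_left mult.assoc power_0_left)
qed

lemma Psi_eq_unitriangular:
  "Psi p phi n \<alpha> = (\<lambda>k. if k < n then \<alpha> k + (\<Sum>i<k. Delta p phi (k - i) (\<alpha> i)) else 0)"
  by (simp add: Psi_def lessThan_Suc_atMost[symmetric] Delta_def fun_eq_iff)

lemma bij_betw_unitriangular_Wn:
  fixes n :: nat and f :: "nat \<Rightarrow> nat \<Rightarrow> 'a::comm_ring_1 \<Rightarrow> 'a"
  defines "T \<equiv> \<lambda>\<alpha> k. if k < n then \<alpha> k + (\<Sum>i<k. f k i (\<alpha> i)) else 0"
  shows "bij_betw T (Wn n) (Wn n)"
proof (rule bij_betw_imageI)
  show "inj_on T (Wn n)"
  proof
    fix x y :: "nat \<Rightarrow> 'a" assume x: "x \<in> Wn n" and y: "y \<in> Wn n" and Txy: "T x = T y"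
    show "x = y"
    proof
      fix k
      show "x k = y k"
      proof (induction k rule: less_induct)
        case (less k)
        then have "(\<Sum>i<k. f k i (x i)) = (\<Sum>i<k. f k i (y i))"
          by (intro sum.cong) auto
        then show ?case
          using x y fun_cong[OF Txy, of k] by (cases "k < n") (auto simp: T_def Wn_def)
      qed
    qed
  qed
  show "T ` Wn n = Wn n"
  proof
    show "T ` Wn n \<subseteq> Wn n"
      by (auto simp: T_def Wn_def)
  next
    show "Wn n \<subseteq> T ` Wn n"
    proof
      fix y :: "nat \<Rightarrow> 'a" assume y: "y \<in> Wn n"
      have "\<exists>x\<in>Wn k. \<forall>j<k. T x j = y j" if "k \<le> n" for k
        using that
      proof (induction k)
        case 0
        show ?case by (rule bexI[of _ "\<lambda>_. 0"]) (auto simp: Wn_def)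
      next
        case (Suc k)
        then obtain x where x: "x \<in> Wn k" "\<forall>j<k. T x j = y j" by auto
        define c where "c = y k - (\<Sum>i<k. f k i (x i))"
        have same_sum: "(\<Sum>i<j. f j i ((x(k := c)) i)) = (\<Sum>i<j. f j i (x i))" if "j \<le> k" for j
          using that by (intro sum.cong) auto
        have "x(k := c) \<in> Wn (Suc k)"
          using x(1) by (auto simp: Wn_def)
        moreover have "T (x(k := c)) j = y j" if "j < Suc k" for j
          using that x(2) same_sum[of j] Suc.prems
          by (cases "j = k") (auto simp: T_def c_def)
        ultimately show ?case by blast
      qed
      then obtain x where x: "x \<in> Wn n" "\<forall>j<n. T x j = y j"
        by blast
      then have "T x = y"
        using y by (auto simp: T_def Wn_def fun_eq_iff)
      with x(1) show "y \<in> T ` Wn n" by blast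
    qed
  qed
qed

locale torsion_free_frobenius_lift = frobenius_lift p phi
  for p and phi :: "'a::comm_ring_1 \<Rightarrow> 'a" +
  assumes torsion_free: "\<And>x::'a. of_nat p * x = 0 \<Longrightarrow> x = 0"
begin

lemma p_pos: "0 < p"
  using torsion_free[of 1] by (cases p) auto

lemma of_nat_power_mult_cancel:
  "of_nat p ^ k * x = of_nat p ^ k * y \<Longrightarrow> x = y" for x y :: 'a
proof (induction k)
  case (Suc k)
  then have "of_nat p * (of_nat p ^ k * x - of_nat p ^ k * y) = 0"
    by (simp add: algebra_simps)
  then have "of_nat p ^ k * x - of_nat p ^ k * y = 0"
    by (rule torsion_free)
  then show ?case
    using Suc.IH by simp
qed simp

lemma ghost_inj:
  fixes x y :: "nat \<Rightarrow> 'a"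
  assumes "x \<in> Wn n" "y \<in> Wn n" and "\<And>m. m < n \<Longrightarrow> ghost p x m = ghost p y m"
  shows "x = y"
proof
  fix k
  show "x k = y k"
  proof (induction k rule: less_induct)
    case (less k)
    show ?case
    proof (cases "k < n")
      case True
      have "(\<Sum>i<k. of_nat p ^ i * x i ^ p ^ (k - i)) = (\<Sum>i<k. of_nat p ^ i * y i ^ p ^ (k - i))"
        using less by (intro sum.cong) auto
      then have "of_nat p ^ k * x k = of_nat p ^ k * y k"
        using assms(3)[OF True] by (simp add: ghost_eq_lessThan)
      then show ?thesis by (rule of_nat_power_mult_cancel)
    qed (use assms in \<open>simp add: Wn_def\<close>)
  qed
qed

lemma The_ghost_preimage:
  fixes g :: "nat \<Rightarrow> 'a"
  assumes "\<And>m. m < n \<Longrightarrow> of_nat p ^ m dvd frob_diff phi g m"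
  shows "(THE z. z \<in> Wn n \<and> (\<forall>m<n. ghost p z m = g m)) \<in> Wn n
    \<and> (\<forall>m<n. ghost p (THE z. z \<in> Wn n \<and> (\<forall>m<n. ghost p z m = g m)) m = g m)"
proof -
  have "\<exists>!z. z \<in> Wn n \<and> (\<forall>m<n. ghost p z m = g m)"
    using ghost_surj[OF assms] ghost_inj by (metis (no_types, lifting))
  from theI'[OF this] show ?thesis .
qed

lemma s_phi_ghost:
  "s_phi p phi n a \<in> Wn n \<and> (\<forall>m<n. ghost p (s_phi p phi n a) m = (phi ^^ m) a)"
  unfolding s_phi_def by (rule The_ghost_preimage) (rule frob_diff_funpow_dvd)

lemma witt_add_ghost:
  "witt_add p n x y \<in> Wn n \<and> (\<forall>m<n. ghost p (witt_add p n x y) m = ghost p x m + ghost p y m)" for x y :: "nat \<Rightarrow> 'a"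
  unfolding witt_add_def
  by (rule The_ghost_preimage[of n "\<lambda>m. ghost p x m + ghost p y m"])
    (simp add: frob_diff_add frob_diff_ghost_dvd)

lemma witt_sub_ghost:
  "witt_sub p n x y \<in> Wn n \<and> (\<forall>m<n. ghost p (witt_sub p n x y) m = ghost p x m - ghost p y m)" for x y :: "nat \<Rightarrow> 'a"
  unfolding witt_sub_def
  by (rule The_ghost_preimage[of n "\<lambda>m. ghost p x m - ghost p y m"])
    (simp add: frob_diff_diff frob_diff_ghost_dvd)

lemma witt_mult_ghost:
  "witt_mult p n x y \<in> Wn n \<and> (\<forall>m<n. ghost p (witt_mult p n x y) m = ghost p x m * ghost p y m)" for x y :: "nat \<Rightarrow> 'a"
  unfolding witt_mult_def
  by (rule The_ghost_preimage[of n "\<lambda>m. ghost p x m * ghost p y m"])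
    (intro frob_diff_mult_dvd frob_diff_ghost_dvd)


lemma DeltaW_ghost:
  assumes "1 \<le> n" and "\<alpha> \<in> Wn n"
  shows "DeltaW p phi n \<alpha> \<in> Wn (n - 1)"
    and "Suc m < n \<Longrightarrow>
      of_nat p * ghost p (DeltaW p phi n \<alpha>) m = ghost p \<alpha> (Suc m) - (phi ^^ Suc m) (\<alpha> 0)"
proof -
  define z where "z = witt_sub p n \<alpha> (s_phi p phi n (\<alpha> 0))"
  have z: "z \<in> Wn n" "\<And>m. m < n \<Longrightarrow> ghost p z m = ghost p \<alpha> m - (phi ^^ m) (\<alpha> 0)"
    using witt_sub_ghost s_phi_ghost unfolding z_def by auto
  then have "z 0 = 0"
    using assms(1) by (metis ghost_0 funpow_0 diff_self less_le_trans zero_less_one)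
  then have DeltaW: "DeltaW p phi n \<alpha> = (\<lambda>i. z (Suc i))"
    unfolding DeltaW_def z_def[symmetric] using z(1) by (rule The_verschiebung_preimage[rotated])
  show "DeltaW p phi n \<alpha> \<in> Wn (n - 1)"
    using z(1) by (auto simp: DeltaW Wn_def)
  show "of_nat p * ghost p (DeltaW p phi n \<alpha>) m = ghost p \<alpha> (Suc m) - (phi ^^ Suc m) (\<alpha> 0)"
    if "Suc m < n"
    using ghost_shift[of p z m, OF p_pos \<open>z 0 = 0\<close>] z(2)[OF that] by (simp add: DeltaW)
qed

lemma iterD_ghost:
  "\<beta> \<in> Wn (Suc (Suc k)) \<Longrightarrow>
    of_nat p ^ Suc k * iterD p phi (Suc (Suc k)) \<beta> 0 = frob_diff phi (ghost p \<beta>) (Suc k)"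
proof (induction k arbitrary: \<beta>)
  case 0
  then show ?case
    using DeltaW_ghost(2)[of "Suc (Suc 0)" \<beta> 0] by (simp add: frob_diff_def)
next
  case (Suc k)
  define \<gamma> where "\<gamma> = DeltaW p phi (Suc (Suc (Suc k))) \<beta>"
  have \<gamma>: "\<gamma> \<in> Wn (Suc (Suc k))"
    "\<And>m. m < Suc (Suc k) \<Longrightarrow> of_nat p * ghost p \<gamma> m = ghost p \<beta> (Suc m) - (phi ^^ Suc m) (\<beta> 0)"
    using DeltaW_ghost[of "Suc (Suc (Suc k))" \<beta>] Suc.prems unfolding \<gamma>_def by auto
  have "of_nat p ^ Suc (Suc k) * iterD p phi (Suc (Suc (Suc k))) \<beta> 0
      = of_nat p * (of_nat p ^ Suc k * iterD p phi (Suc (Suc k)) \<gamma> 0)"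
    by (simp add: \<gamma>_def mult.assoc)
  also have "\<dots> = of_nat p * ghost p \<gamma> (Suc k) - phi (of_nat p * ghost p \<gamma> k)"
    using Suc.IH[OF \<gamma>(1)] by (simp add: frob_diff_def right_diff_distrib)
  also have "\<dots> = frob_diff phi (ghost p \<beta>) (Suc (Suc k))"
    using \<gamma>(2) by (simp add: frob_diff_def)
  finally show ?case .
qed

lemma ghost_teich: "ghost p (teich (Suc n) a) m = a ^ p ^ m"
proof (cases m)
  case (Suc k)
  then show ?thesis
    using p_pos unfolding Suc ghost_eq sum.atMost_Suc_shift by (simp add: teich_def power_0_left)
qed (simp add: teich_def)

lemma Delta_ghost: "of_nat p ^ s * Delta p phi s a = frob_diff phi (\<lambda>m. a ^ p ^ m) s"
proof (cases s)
  case (Suc k)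
  have "teich (Suc (Suc k)) a \<in> Wn (Suc (Suc k))"
    by (simp add: Wn_def teich_def)
  from iterD_ghost[OF this] show ?thesis
    using Suc by (simp add: Delta_def ghost_teich frob_diff_def del: power_Suc)
qed (simp add: Delta_def frob_diff_def)

lemma Psi_ghost:
  assumes "k < n"
  shows "of_nat p ^ k * Psi p phi n \<alpha> k = frob_diff phi (ghost p \<alpha>) k"
proof (cases k)
  case (Suc k')
  have summand: "of_nat p ^ Suc k' * Delta p phi (Suc k' - i) (\<alpha> i)
      = of_nat p ^ i * (\<alpha> i ^ p ^ (Suc k' - i) - phi (\<alpha> i ^ p ^ (k' - i)))" if "i \<le> k'" for i
  proof -
    have "Suc k' = i + Suc (k' - i)" using that by simp
    then have "of_nat p ^ Suc k' = of_nat p ^ i * (of_nat p ^ Suc (k' - i) :: 'a)"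
      by (metis power_add)
    then show ?thesis
      using that Delta_ghost[of "Suc (k' - i)" "\<alpha> i"]
      by (simp add: Suc_diff_le frob_diff_def mult.assoc del: power_Suc phi_power)
  qed
  have "of_nat p ^ k * Psi p phi n \<alpha> k
      = (\<Sum>i\<le>k'. of_nat p ^ Suc k' * Delta p phi (Suc k' - i) (\<alpha> i)) + of_nat p ^ Suc k' * \<alpha> (Suc k')"
    using assms Suc by (simp add: Psi_def sum_distrib_left distrib_left Delta_def del: power_Suc)
  also have "\<dots> = (\<Sum>i\<le>k'. of_nat p ^ i * (\<alpha> i ^ p ^ (Suc k' - i) - phi (\<alpha> i ^ p ^ (k' - i))))
      + of_nat p ^ Suc k' * \<alpha> (Suc k')"
    using summand by simp
  also have "\<dots> = frob_diff phi (ghost p \<alpha>) k"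
    using Suc by (simp add: frob_diff_def ghost_eq phi_sum right_diff_distrib sum_subtractf
        phi_power[of "of_nat p"] del: power_Suc phi_power)
  finally show ?thesis .
qed (use assms in \<open>simp add: Psi_def Delta_def frob_diff_def\<close>)

lemma Psi_bij: "bij_betw (Psi p phi n) (Wn n) (Wn n)"
  unfolding Psi_eq_unitriangular[abs_def]
  by (rule bij_betw_unitriangular_Wn[of n "\<lambda>k i. Delta p phi (k - i)"])

lemma Psi_witt_add:
  "Psi p phi n (witt_add p n x y) = (\<lambda>k. Psi p phi n x k + Psi p phi n y k)"
proof
  fix k
  show "Psi p phi n (witt_add p n x y) k = Psi p phi n x k + Psi p phi n y k"
  proof (cases "k < n")
    case True
    have "frob_diff phi (ghost p (witt_add p n x y)) k
        = frob_diff phi (\<lambda>m. ghost p x m + ghost p y m) k"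
      using True witt_add_ghost by (intro frob_diff_cong) auto
    then have "of_nat p ^ k * Psi p phi n (witt_add p n x y) k
        = of_nat p ^ k * (Psi p phi n x k + Psi p phi n y k)"
      using True by (simp add: Psi_ghost frob_diff_add distrib_left)
    then show ?thesis by (rule of_nat_power_mult_cancel)
  qed (simp add: Psi_def)
qed

lemma Psi_witt_mult_s_phi:
  "Psi p phi n (witt_mult p n (s_phi p phi n a) x) = (\<lambda>k. (phi ^^ k) a * Psi p phi n x k)"
proof
  fix k
  show "Psi p phi n (witt_mult p n (s_phi p phi n a) x) k = (phi ^^ k) a * Psi p phi n x k"
  proof (cases "k < n")
    case True
    have "frob_diff phi (ghost p (witt_mult p n (s_phi p phi n a) x)) k
        = frob_diff phi (\<lambda>m. (phi ^^ m) a * ghost p x m) k"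
      using True witt_mult_ghost s_phi_ghost by (intro frob_diff_cong) auto
    then have "of_nat p ^ k * Psi p phi n (witt_mult p n (s_phi p phi n a) x) k
        = of_nat p ^ k * ((phi ^^ k) a * Psi p phi n x k)"
      using True by (simp add: Psi_ghost frob_diff_scale mult.left_commute)
    then show ?thesis by (rule of_nat_power_mult_cancel)
  qed (simp add: Psi_def)
qed

end

theorem theorem3p7:
  fixes p :: nat and phi :: "'a::comm_ring_1 \<Rightarrow> 'a" and n :: nat
  assumes "prime p"
    and torsion_free: "\<forall>x::'a. of_nat p * x = 0 \<longrightarrow> x = 0"
    and phi_one: "phi 1 = 1"
    and phi_add: "\<forall>x y. phi (x + y) = phi x + phi y"
    and phi_mult: "\<forall>x y. phi (x * y) = phi x * phi y"
    and phi_frob: "\<forall>a. \<exists>b. phi a - a ^ p = of_nat p * b"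
    and "1 \<le> n"
  shows "bij_betw (Psi p phi n) (Wn n) (Wn n)
    \<and> (\<forall>x\<in>Wn n. \<forall>y\<in>Wn n. Psi p phi n (witt_add p n x y) = (\<lambda>k. Psi p phi n x k + Psi p phi n y k))
    \<and> (\<forall>a. \<forall>x\<in>Wn n. Psi p phi n (witt_mult p n (s_phi p phi n a) x)
                      = (\<lambda>k. (phi ^^ k) a * Psi p phi n x k))"
proof -
  interpret torsion_free_frobenius_lift p phi
    using torsion_free phi_one phi_add phi_mult phi_frob
    by unfold_locales (auto simp: dvd_def)
  show ?thesis
    using Psi_bij Psi_witt_add Psi_witt_mult_s_phi by blast
qed

end
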